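(* In the continuous-time single-buyer game with known total value $V=1$, every truthful direct-revelation mechanism satisfies $\inf_v X_v\le 1/e$, where the infimum is over all buyer types $v$ and $X_v=\int_0^1x_v(t)\,dt$ is the revenue obtained from type $v$.
   Context: Continuous-time single-buyer game: a buyer type is a Lipschitz-continuous $v:[0,1]\to[0,\infty)$ with $\int_0^1 v(t)\,dt=V$ ($V$ known to the seller). A direct-revelation mechanism assigns to each type $v$ a continuous rate function $r_v:[0,1]\to[0,1]$ and a continuous payment function $x_v:[0,1]\to[0,\infty)$. It is truthful if (i) $r_v(t)v(t)-x_v(t)\ge0$ for all types $v$ and all $t\in[0,1]$, and (ii) for all types $v,v'$ and $\tau\in[0,1]$ such that $r_{v'}(t)v(t)-x_{v'}(t)\ge0$ for all $0\le t\le\tau$, we have $\int_0^1(r_v(t)v(t)-x_v(t))\,dt\ge\int_0^\tau(r_{v'}(t)v(t)-x_{v'}(t))\,dt$. *)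

theory Defs
  imports "HOL-Analysis.Analysis"
begin

definition buyer_type :: "real \<Rightarrow> (real \<Rightarrow> real) \<Rightarrow> bool" where
  "buyer_type V v \<longleftrightarrow>
     (\<exists>L. L-lipschitz_on {0..1} v) \<and>
     (\<forall>t\<in>{0..1}. 0 \<le> v t) \<and>
     integral {0..1} v = V"

definition mechanism :: "real \<Rightarrow> ((real \<Rightarrow> real) \<Rightarrow> real \<Rightarrow> real)
    \<Rightarrow> ((real \<Rightarrow> real) \<Rightarrow> real \<Rightarrow> real) \<Rightarrow> bool" where
  "mechanism V r x \<longleftrightarrow>
     (\<forall>v. buyer_type V v \<longrightarrow>
        continuous_on {0..1} (r v) \<and> (\<forall>t\<in>{0..1}. 0 \<le> r v t \<and> r v t \<le> 1) \<and>
        continuous_on {0..1} (x v) \<and> (\<forall>t\<in>{0..1}. 0 \<le> x v t))"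

definition truthful :: "real \<Rightarrow> ((real \<Rightarrow> real) \<Rightarrow> real \<Rightarrow> real)
    \<Rightarrow> ((real \<Rightarrow> real) \<Rightarrow> real \<Rightarrow> real) \<Rightarrow> bool" where
  "truthful V r x \<longleftrightarrow>
     (\<forall>v. buyer_type V v \<longrightarrow> (\<forall>t\<in>{0..1}. r v t * v t - x v t \<ge> 0)) \<and>
     (\<forall>v v' \<tau>. buyer_type V v \<longrightarrow> buyer_type V v' \<longrightarrow> \<tau> \<in> {0..1} \<longrightarrow>
        (\<forall>t\<in>{0..\<tau>}. r v' t * v t - x v' t \<ge> 0) \<longrightarrow>
        integral {0..1} (\<lambda>t. r v t * v t - x v t)
          \<ge> integral {0..\<tau>} (\<lambda>t. r v' t * v t - x v' t))"

definition revenue :: "((real \<Rightarrow> real) \<Rightarrow> real \<Rightarrow> real) \<Rightarrow> (real \<Rightarrow> real) \<Rightarrow> real" where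
  "revenue x v = integral {0..1} (x v)"

end

theory Submission
  imports Defs
begin

(* Write F_w(s) for the integral of w over [0, s] and U for the supremum of the utilities of all
   types. Given a type w and a time s, the type that agrees with w before s and carries the whole
   remaining value 1 - F_w(s) just after s can report w until shortly after s, which secures it
   about r_w(s) (1 - F_w(s)); hence r_v(t) (1 - F_v(t)) <= U for all types v and times t.
   So r_v <= U / (1 - F_v) until F_v reaches 1 - U, and integrating gives an allocation
   int r_v v <= U ln(1/U) + U. Allocation is utility plus revenue, whence
   U + inf revenue <= U ln(1/U) + U, i.e. inf revenue <= U ln(1/U) <= 1/e. *)

lemma buyer_typeD:
  assumes "buyer_type V v"
  shows "continuous_on {0..1} v" "\<And>t. t \<in> {0..1} \<Longrightarrow> 0 \<le> v t" "integral {0..1} v = V"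
  using assms unfolding buyer_type_def by (auto intro: lipschitz_on_continuous_on)

lemma buyer_type_bounded:
  assumes "buyer_type V w"
  obtains B where "0 < B" "\<And>t. t \<in> {0..1} \<Longrightarrow> \<bar>w t\<bar> \<le> B"
proof -
  have "bounded (w ` {0..1})"
    using buyer_typeD(1)[OF assms] by (intro compact_imp_bounded compact_continuous_image) auto
  then obtain B where "0 < B" "\<forall>y\<in>w ` {0..1}. norm y \<le> B"
    unfolding bounded_pos by blast
  then show thesis
    using that by simp
qed

lemma integrable_on_subinterval_of_continuous:
  fixes f :: "real \<Rightarrow> real"
  assumes "continuous_on {a..b} f" "{c..d} \<subseteq> {a..b}"
  shows "f integrable_on {c..d}"
  using integrable_continuous_interval[OF assms(1)] assms(2) by (rule integrable_on_subinterval)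

lemma buyer_type_integral_initial_bounds:
  assumes "buyer_type V w" "s \<in> {0..1}"
  shows "0 \<le> integral {0..s} w" "integral {0..s} w \<le> V"
proof -
  have int: "w integrable_on {0..s}" "w integrable_on {0..1}"
    using assms(2)
    by (auto intro: integrable_on_subinterval_of_continuous[OF buyer_typeD(1)[OF assms(1)]])
  show "0 \<le> integral {0..s} w"
    using buyer_typeD(2)[OF assms(1)] assms(2) by (intro integral_nonneg int) auto
  have "integral {0..s} w \<le> integral {0..1} w"
    using buyer_typeD(2)[OF assms(1)] assms(2) by (intro integral_subset_le int) auto
  then show "integral {0..s} w \<le> V"
    using buyer_typeD(3)[OF assms(1)] by simp
qed

lemma diff_mult_diff_ge:
  fixes a b \<eta> :: real
  assumes "0 \<le> a" "a \<le> 1" "0 \<le> b" "b \<le> 1" "0 \<le> \<eta>"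
  shows "a * b - 2 * \<eta> \<le> (a - \<eta>) * (b - \<eta>)"
proof -
  have "\<eta> * (a + b) \<le> \<eta> * 2"
    using assms by (intro mult_left_mono) auto
  moreover have "(a - \<eta>) * (b - \<eta>) = a * b - \<eta> * (a + b) + \<eta> * \<eta>"
    by (simp add: algebra_simps)
  ultimately show ?thesis
    using mult_nonneg_nonneg[OF assms(5) assms(5)] by linarith
qed

lemma mult_ln_inverse_le_exp_minus_one:
  assumes "0 < (K::real)"
  shows "K * ln (1/K) \<le> exp (-1)"
proof -
  have "ln (1/K) - 1 = ln (1 / (K * exp 1))"
    using assms by (simp add: ln_div ln_mult)
  also have "\<dots> \<le> 1 / (K * exp 1) - 1"
    using assms by (intro ln_le_minus_one) simp
  finally have "K * ln (1/K) \<le> K * (1 / (K * exp 1))"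
    using assms by (intro mult_left_mono) auto
  also have "\<dots> = exp (-1)"
    using assms by (simp add: exp_minus divide_inverse)
  finally show ?thesis .
qed

lemma has_integral_div_one_minus_integral:
  fixes v :: "real \<Rightarrow> real"
  assumes "a \<le> b" "continuous_on {a..b} v"
    and less_one: "\<And>t. t \<in> {a..b} \<Longrightarrow> integral {a..t} v < 1"
  shows "((\<lambda>t. v t / (1 - integral {a..t} v)) has_integral - ln (1 - integral {a..b} v)) {a..b}"
proof -
  have "((\<lambda>t. - ln (1 - integral {a..t} v)) has_real_derivative v t / (1 - integral {a..t} v))
          (at t within {a..b})" if "t \<in> {a..b}" for t
  proof -
    have "0 < 1 - integral {a..t} v"
      using less_one[OF that] by simp
    moreover have "((\<lambda>t. 1 - integral {a..t} v) has_real_derivative - v t) (at t within {a..b})"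
      using DERIV_diff[OF DERIV_const integral_has_real_derivative[OF assms(2) that]] by simp
    ultimately have "((\<lambda>t. ln (1 - integral {a..t} v)) has_real_derivative
                       1 / (1 - integral {a..t} v) * - v t) (at t within {a..b})"
      by (rule DERIV_chain2[OF DERIV_ln_divide])
    then show ?thesis
      using DERIV_minus by fastforce
  qed
  then have "((\<lambda>t. v t / (1 - integral {a..t} v)) has_integral
               - ln (1 - integral {a..b} v) - - ln (1 - integral {a..a} v)) {a..b}"
    using assms(1) by (intro fundamental_theorem_of_calculus)
      (auto simp flip: has_real_derivative_iff_has_vector_derivative)
  then show ?thesis by simp
qed

lemma integral_mult_le_ln_survival:
  fixes r v :: "real \<Rightarrow> real"
  assumes "0 \<le> b" and v: "continuous_on {0..b} v" "\<And>t. t \<in> {0..b} \<Longrightarrow> 0 \<le> v t"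
    and r: "continuous_on {0..b} r" and "0 < K"
    and survival: "\<And>t. t \<in> {0..b} \<Longrightarrow> K \<le> 1 - integral {0..t} v"
    and bound: "\<And>t. t \<in> {0..b} \<Longrightarrow> r t * (1 - integral {0..t} v) \<le> K"
  shows "integral {0..b} (\<lambda>t. r t * v t) \<le> K * - ln (1 - integral {0..b} v)"
proof -
  have "((\<lambda>t. v t / (1 - integral {0..t} v)) has_integral - ln (1 - integral {0..b} v)) {0..b}"
  proof (rule has_integral_div_one_minus_integral[OF \<open>0 \<le> b\<close> v(1)])
    show "integral {0..t} v < 1" if "t \<in> {0..b}" for t
      using survival[OF that] \<open>0 < K\<close> by linarith
  qed
  then have log_integral: "((\<lambda>t. K * (v t / (1 - integral {0..t} v))) has_integral
                              K * - ln (1 - integral {0..b} v)) {0..b}"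
    by (rule has_integral_mult_right)
  have "integral {0..b} (\<lambda>t. r t * v t) \<le> integral {0..b} (\<lambda>t. K * (v t / (1 - integral {0..t} v)))"
  proof (rule integral_le)
    show "(\<lambda>t. r t * v t) integrable_on {0..b}"
      using r v(1) by (intro integrable_continuous_interval continuous_on_mult)
    show "(\<lambda>t. K * (v t / (1 - integral {0..t} v))) integrable_on {0..b}"
      using log_integral by blast
    fix t assume t: "t \<in> {0..b}"
    have "r t \<le> K / (1 - integral {0..t} v)"
      using bound[OF t] survival[OF t] \<open>0 < K\<close> by (simp add: le_divide_eq)
    then have "r t * v t \<le> K / (1 - integral {0..t} v) * v t"
      using v(2)[OF t] by (rule mult_right_mono)
    then show "r t * v t \<le> K * (v t / (1 - integral {0..t} v))"
      by simp
  qed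
  also have "\<dots> = K * - ln (1 - integral {0..b} v)"
    using log_integral by (rule integral_unique)
  finally show ?thesis .
qed

lemma integral_mult_le_of_survival_bound:
  fixes r v :: "real \<Rightarrow> real"
  assumes v: "continuous_on {0..1} v" "\<And>t. t \<in> {0..1} \<Longrightarrow> 0 \<le> v t" "integral {0..1} v = 1"
    and r: "continuous_on {0..1} r" "\<And>t. t \<in> {0..1} \<Longrightarrow> 0 \<le> r t \<and> r t \<le> 1"
    and K: "0 < K" "K \<le> 1"
    and bound: "\<And>t. t \<in> {0..1} \<Longrightarrow> r t * (1 - integral {0..t} v) \<le> K"
  shows "integral {0..1} (\<lambda>t. r t * v t) \<le> K * ln (1/K) + K"
proof -
  define F where "F t = integral {0..t} v" for t
  have int_v: "v integrable_on {a..b}" if "0 \<le> a" "b \<le> 1" for a b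
    using that by (intro integrable_on_subinterval_of_continuous[OF v(1)]) auto
  have int_rv: "(\<lambda>t. r t * v t) integrable_on {a..b}" if "0 \<le> a" "b \<le> 1" for a b
    using that continuous_on_mult[OF r(1) v(1)]
    by (intro integrable_on_subinterval_of_continuous) auto
  have "continuous_on {0..1} F"
    unfolding F_def by (intro indefinite_integral_continuous_1 int_v) auto
  moreover have "F 0 = 0" "F 1 = 1"
    using v(3) by (simp_all add: F_def)
  ultimately obtain t0 where t0: "0 \<le> t0" "t0 \<le> 1" "F t0 = 1 - K"
    using IVT'[of F 0 "1 - K" 1] K by auto
  have survival: "K \<le> 1 - F t" if "t \<in> {0..t0}" for t
  proof -
    have "F t \<le> F t0"
      unfolding F_def using that t0 v(2) by (intro integral_subset_le int_v) auto
    then show ?thesis using t0 by simp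
  qed
  have "integral {0..t0} (\<lambda>t. r t * v t) \<le> K * - ln (1 - F t0)"
    unfolding F_def using t0(1,2) survival bound v(2) K(1)
    by (intro integral_mult_le_ln_survival continuous_on_subset[OF v(1)] continuous_on_subset[OF r(1)])
       (auto simp: F_def)
  also have "\<dots> = K * ln (1/K)"
    using t0(3) K by (simp add: ln_div)
  finally have before: "integral {0..t0} (\<lambda>t. r t * v t) \<le> K * ln (1/K)" .
  have "integral {t0..1} (\<lambda>t. r t * v t) \<le> integral {t0..1} v"
    using t0 r(2) v(2) by (intro integral_le int_rv int_v) (auto intro!: mult_left_le_one_le)
  also have "\<dots> = K"
    using Henstock_Kurzweil_Integration.integral_combine[OF t0(1,2) int_v[of 0 1]] v(3) t0(3)
    by (simp add: F_def)
  finally have after: "integral {t0..1} (\<lambda>t. r t * v t) \<le> K" .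
  show ?thesis
    using Henstock_Kurzweil_Integration.integral_combine[OF t0(1,2) int_rv[of 0 1]] before after
    by simp
qed

lemma lipschitz_on_mult:
  fixes f g :: "'a::metric_space \<Rightarrow> real"
  assumes "L-lipschitz_on S f" "M-lipschitz_on S g"
    and "\<And>x. x \<in> S \<Longrightarrow> \<bar>f x\<bar> \<le> A" "\<And>x. x \<in> S \<Longrightarrow> \<bar>g x\<bar> \<le> B" "0 \<le> A" "0 \<le> B"
  shows "(A * M + B * L)-lipschitz_on S (\<lambda>x. f x * g x)"
proof (rule lipschitz_onI)
  show "0 \<le> A * M + B * L"
    using assms lipschitz_on_nonneg[OF assms(1)] lipschitz_on_nonneg[OF assms(2)] by simp
  fix x y assume xy: "x \<in> S" "y \<in> S"
  have "\<bar>f x * g x - f y * g y\<bar> = \<bar>f x * (g x - g y) + g y * (f x - f y)\<bar>"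
    by (simp add: algebra_simps)
  also have "\<dots> \<le> \<bar>f x\<bar> * \<bar>g x - g y\<bar> + \<bar>g y\<bar> * \<bar>f x - f y\<bar>"
    by (metis abs_mult abs_triangle_ineq)
  also have "\<dots> \<le> A * (M * dist x y) + B * (L * dist x y)"
    using lipschitz_onD[OF assms(1) xy] lipschitz_onD[OF assms(2) xy] assms(3-6) xy
    by (intro add_mono mult_mono) (auto simp: dist_real_def)
  finally show "dist (f x * g x) (f y * g y) \<le> (A * M + B * L) * dist x y"
    by (simp add: dist_real_def algebra_simps)
qed

definition tent :: "real \<Rightarrow> real \<Rightarrow> real \<Rightarrow> real"
  where "tent c \<delta> t = max 0 (\<delta> - \<bar>t - c\<bar>)"

definition cutoff :: "real \<Rightarrow> real \<Rightarrow> real \<Rightarrow> real"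
  where "cutoff a \<delta> t = max 0 (min 1 ((a - t) / \<delta>))"

lemma tent_nonneg: "0 \<le> tent c \<delta> t"
  by (simp add: tent_def)

lemma tent_eq_0: "\<delta> \<le> \<bar>t - c\<bar> \<Longrightarrow> tent c \<delta> t = 0"
  by (simp add: tent_def)

lemma lipschitz_on_tent: "1-lipschitz_on S (tent c \<delta>)"
  by (rule lipschitz_onI) (auto simp: tent_def dist_real_def max_def abs_if)

lemma continuous_on_tent: "continuous_on S (tent c \<delta>)"
  using lipschitz_on_tent by (rule lipschitz_on_continuous_on)

lemma integral_tent_superset:
  assumes "{c - \<delta>..c + \<delta>} \<subseteq> {a..b}"
  shows "integral {a..b} (tent c \<delta>) = integral {c - \<delta>..c + \<delta>} (tent c \<delta>)"
proof -
  have "(tent c \<delta> has_integral integral {c - \<delta>..c + \<delta>} (tent c \<delta>)) {c - \<delta>..c + \<delta>}"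
    by (intro integrable_integral integrable_continuous_interval continuous_on_tent)
  then have "(tent c \<delta> has_integral integral {c - \<delta>..c + \<delta>} (tent c \<delta>)) {a..b}"
    by (rule has_integral_on_superset) (use assms in \<open>auto intro: tent_eq_0\<close>)
  then show ?thesis by (rule integral_unique)
qed

lemma integral_tent_pos:
  assumes "0 < \<delta>"
  shows "0 < integral {c - \<delta>..c + \<delta>} (tent c \<delta>)"
proof -
  have "tent c \<delta> c \<noteq> 0" "c \<in> {c - \<delta>..c + \<delta>}"
    using assms by (simp_all add: tent_def)
  then have "integral {c - \<delta>..c + \<delta>} (tent c \<delta>) \<noteq> 0"
    using assms integral_eq_0_iff[OF continuous_on_tent, of "c - \<delta>" "c + \<delta>" c \<delta>]
    by (auto simp: tent_nonneg)
  moreover have "0 \<le> integral {c - \<delta>..c + \<delta>} (tent c \<delta>)"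
    by (intro integral_nonneg integrable_continuous_interval continuous_on_tent tent_nonneg)
  ultimately show ?thesis by simp
qed

lemma cutoff_bounds: "0 \<le> cutoff a \<delta> t" "cutoff a \<delta> t \<le> 1"
  by (simp_all add: cutoff_def)

lemma cutoff_eq_1: "0 < \<delta> \<Longrightarrow> t \<le> a - \<delta> \<Longrightarrow> cutoff a \<delta> t = 1"
  by (simp add: cutoff_def field_simps)

lemma cutoff_eq_0: "0 < \<delta> \<Longrightarrow> a \<le> t \<Longrightarrow> cutoff a \<delta> t = 0"
  by (simp add: cutoff_def divide_nonpos_pos)

lemma lipschitz_on_cutoff:
  assumes "0 < \<delta>"
  shows "(1/\<delta>)-lipschitz_on S (cutoff a \<delta>)"
proof (rule lipschitz_onI)
  fix x y
  have "\<bar>cutoff a \<delta> x - cutoff a \<delta> y\<bar> \<le> \<bar>(a - x) / \<delta> - (a - y) / \<delta>\<bar>"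
    by (auto simp: cutoff_def max_def min_def abs_if)
  also have "\<dots> = (1/\<delta>) * \<bar>x - y\<bar>"
    using assms by (simp add: diff_divide_distrib[symmetric] abs_minus_commute)
  finally show "dist (cutoff a \<delta> x) (cutoff a \<delta> y) \<le> (1/\<delta>) * dist x y"
    by (simp add: dist_real_def)
qed (use assms in simp)

lemma continuous_on_cutoff: "0 < \<delta> \<Longrightarrow> continuous_on S (cutoff a \<delta>)"
  by (rule lipschitz_on_continuous_on) (rule lipschitz_on_cutoff)

lemma integral_mult_cutoff_bounds:
  fixes f :: "real \<Rightarrow> real"
  assumes f: "continuous_on {0..1} f" "\<And>t. t \<in> {0..1} \<Longrightarrow> 0 \<le> f t" and "0 < \<delta>"
  shows "0 \<le> integral {0..1} (\<lambda>t. f t * cutoff a \<delta> t)"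
    and "integral {0..1} (\<lambda>t. f t * cutoff a \<delta> t) \<le> integral {0..1} f"
proof -
  have int: "(\<lambda>t. f t * cutoff a \<delta> t) integrable_on {0..1}"
    using f(1) \<open>0 < \<delta>\<close> by (intro integrable_continuous_interval continuous_on_mult continuous_on_cutoff)
  show "0 \<le> integral {0..1} (\<lambda>t. f t * cutoff a \<delta> t)"
    using f(2) by (intro integral_nonneg int) (simp add: cutoff_bounds)
  show "integral {0..1} (\<lambda>t. f t * cutoff a \<delta> t) \<le> integral {0..1} f"
    using f by (intro integral_le int integrable_continuous_interval)
      (simp_all add: mult_left_le cutoff_bounds)
qed

lemma integral_mult_cutoff_le:
  fixes f :: "real \<Rightarrow> real"
  assumes f: "continuous_on {0..1} f" "\<And>t. t \<in> {0..1} \<Longrightarrow> 0 \<le> f t \<and> f t \<le> B"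
    and a: "0 \<le> s" "s \<le> a" "a \<le> 1" and "0 < \<delta>"
  shows "integral {0..1} (\<lambda>t. f t * cutoff a \<delta> t) \<le> integral {0..s} f + B * (a - s)"
proof -
  have "continuous_on {0..1} (\<lambda>t. f t * cutoff a \<delta> t)"
    using f(1) \<open>0 < \<delta>\<close> by (intro continuous_on_mult continuous_on_cutoff)
  then have int_fc: "(\<lambda>t. f t * cutoff a \<delta> t) integrable_on {c..d}" if "0 \<le> c" "d \<le> 1" for c d
    using that by (auto intro: integrable_on_subinterval_of_continuous)
  have int_f: "f integrable_on {c..d}" if "0 \<le> c" "d \<le> 1" for c d
    using that f(1) by (auto intro: integrable_on_subinterval_of_continuous)
  have "integral {a..1} (\<lambda>t. f t * cutoff a \<delta> t) = integral {a..1} (\<lambda>t. 0)"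
    using \<open>0 < \<delta>\<close> by (intro integral_cong) (simp add: cutoff_eq_0)
  then have "integral {0..1} (\<lambda>t. f t * cutoff a \<delta> t) = integral {0..a} (\<lambda>t. f t * cutoff a \<delta> t)"
    using a Henstock_Kurzweil_Integration.integral_combine[where a=0 and c=a and b=1, OF _ _ int_fc[of 0 1]]
    by simp
  also have "\<dots> \<le> integral {0..a} f"
    using a f(2) by (intro integral_le int_fc int_f) (auto intro!: mult_left_le simp: cutoff_bounds)
  also have "\<dots> = integral {0..s} f + integral {s..a} f"
    using a by (intro Henstock_Kurzweil_Integration.integral_combine[symmetric] int_f) auto
  also have "integral {s..a} f \<le> integral {s..a} (\<lambda>t. B)"
    using a f(2) by (intro integral_le int_f) auto
  finally show ?thesis
    using a by (simp add: mult.commute)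
qed

lemma buyer_type_mult_cutoff_add_tent:
  assumes w: "buyer_type V w" and "0 < \<delta>" "0 \<le> \<beta>"
    and "integral {0..1} (\<lambda>t. w t * cutoff a \<delta> t) + \<beta> * integral {0..1} (tent c \<rho>) = V"
  shows "buyer_type V (\<lambda>t. w t * cutoff a \<delta> t + \<beta> * tent c \<rho> t)"
  unfolding buyer_type_def
proof (intro conjI)
  obtain L where L: "L-lipschitz_on {0..1} w"
    using w unfolding buyer_type_def by blast
  obtain B where B: "0 < B" "\<And>t. t \<in> {0..1} \<Longrightarrow> \<bar>w t\<bar> \<le> B"
    using buyer_type_bounded[OF w] by blast
  have "(B * (1/\<delta>) + 1 * L)-lipschitz_on {0..1} (\<lambda>t. w t * cutoff a \<delta> t)"
    using B \<open>0 < \<delta>\<close> by (intro lipschitz_on_mult L lipschitz_on_cutoff) (auto simp: cutoff_bounds)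
  then have "(B * (1/\<delta>) + 1 * L + \<bar>\<beta>\<bar> * 1)-lipschitz_on {0..1}
               (\<lambda>t. w t * cutoff a \<delta> t + \<beta> * tent c \<rho> t)"
    by (intro lipschitz_on_add lipschitz_on_cmult_real lipschitz_on_tent)
  then show "\<exists>L. L-lipschitz_on {0..1} (\<lambda>t. w t * cutoff a \<delta> t + \<beta> * tent c \<rho> t)" ..
  show "\<forall>t\<in>{0..1}. 0 \<le> w t * cutoff a \<delta> t + \<beta> * tent c \<rho> t"
    using buyer_typeD(2)[OF w] \<open>0 \<le> \<beta>\<close> by (simp add: cutoff_bounds tent_nonneg)
  have int: "(\<lambda>t. w t * cutoff a \<delta> t) integrable_on {0..1}" "tent c \<rho> integrable_on {0..1}"
    using buyer_typeD(1)[OF w] \<open>0 < \<delta>\<close>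
    by (auto intro!: integrable_continuous_interval continuous_on_mult continuous_on_cutoff
        continuous_on_tent)
  show "integral {0..1} (\<lambda>t. w t * cutoff a \<delta> t + \<beta> * tent c \<rho> t) = V"
    using integral_add[OF int(1) integrable_cmul[OF int(2), of \<beta>]] assms(4) by simp
qed

lemma buyer_type_concentrate_after:
  assumes w: "buyer_type 1 w" and "0 \<le> s" "0 < \<delta>" "s + 2*\<delta> \<le> 1"
    and B: "\<And>t. t \<in> {0..1} \<Longrightarrow> w t \<le> B"
  obtains v g where "buyer_type 1 v" "\<And>t. t \<in> {0..s + \<delta>} \<Longrightarrow> v t = w t + g t"
    and "continuous_on {0..s + \<delta>} g" "\<And>t. 0 \<le> g t" "\<And>t. g t \<noteq> 0 \<Longrightarrow> s < t"
    and "1 - integral {0..s} w - 2 * B * \<delta> \<le> integral {0..s + \<delta>} g"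
proof -
  define c where "c = s + \<delta>/2"
  define M where "M = integral {0..1} (\<lambda>t. w t * cutoff (s + 2*\<delta>) \<delta> t)"
  define A where "A = integral {c - \<delta>/2..c + \<delta>/2} (tent c (\<delta>/2))"
  define \<beta> where "\<beta> = (1 - M) / A"
  define g where "g = (\<lambda>t. \<beta> * tent c (\<delta>/2) t)"
  have M: "0 \<le> M" "M \<le> 1" "M \<le> integral {0..s} w + B * (2*\<delta>)"
    using integral_mult_cutoff_bounds[OF buyer_typeD(1,2)[OF w] \<open>0 < \<delta>\<close>, of "s + 2*\<delta>"]
      integral_mult_cutoff_le[OF buyer_typeD(1)[OF w], of B s "s + 2*\<delta>" \<delta>]
      buyer_typeD[OF w] B assms(2-4)
    by (auto simp: M_def)
  have A_pos: "0 < A"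
    unfolding A_def using \<open>0 < \<delta>\<close> by (intro integral_tent_pos) simp
  have \<beta>_nonneg: "0 \<le> \<beta>"
    unfolding \<beta>_def using M A_pos by simp
  have tent_integral: "integral {a..b} (tent c (\<delta>/2)) = A" if "a \<le> s" "s + \<delta> \<le> b" for a b
    unfolding A_def using that by (intro integral_tent_superset) (auto simp: c_def)
  show thesis
  proof (rule that)
    show "buyer_type 1 (\<lambda>t. w t * cutoff (s + 2*\<delta>) \<delta> t + g t)"
      unfolding g_def using assms(2-4) A_pos tent_integral[of 0 1]
      by (intro buyer_type_mult_cutoff_add_tent[OF w \<open>0 < \<delta>\<close> \<beta>_nonneg]) (simp add: M_def \<beta>_def)
    show "w t * cutoff (s + 2*\<delta>) \<delta> t + g t = w t + g t" if "t \<in> {0..s + \<delta>}" for t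
      using that \<open>0 < \<delta>\<close> by (simp add: cutoff_eq_1)
    show "continuous_on {0..s + \<delta>} g"
      unfolding g_def by (intro continuous_intros continuous_on_tent)
    show "0 \<le> g t" for t
      using \<beta>_nonneg by (simp add: g_def tent_nonneg)
    show "s < t" if "g t \<noteq> 0" for t
    proof -
      have "\<bar>t - c\<bar> < \<delta>/2"
        using that tent_eq_0[of "\<delta>/2" t c] by (force simp: g_def)
      then show ?thesis
        unfolding c_def by linarith
    qed
    show "1 - integral {0..s} w - 2 * B * \<delta> \<le> integral {0..s + \<delta>} g"
      using tent_integral[of 0 "s + \<delta>"] A_pos M(3) assms(2) by (simp add: g_def \<beta>_def)
  qed
qed

lemma buyer_type_concentrate_near:
  assumes w: "buyer_type 1 w" and s: "0 \<le> s" "s < 1" and "0 < \<eta>" "0 < \<sigma>"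
  obtains v \<tau> g where "buyer_type 1 v" "s < \<tau>" "\<tau> \<le> 1" "\<tau> < s + \<sigma>"
    and "\<And>t. t \<in> {0..\<tau>} \<Longrightarrow> v t = w t + g t"
    and "continuous_on {0..\<tau>} g" "\<And>t. 0 \<le> g t" "\<And>t. g t \<noteq> 0 \<Longrightarrow> s < t"
    and "1 - integral {0..s} w - \<eta> \<le> integral {0..\<tau>} g"
proof -
  obtain B where B: "0 < B" "\<And>t. t \<in> {0..1} \<Longrightarrow> \<bar>w t\<bar> \<le> B"
    by (rule buyer_type_bounded[OF w]) blast
  then have w_le: "\<And>t. t \<in> {0..1} \<Longrightarrow> w t \<le> B"
    using abs_le_D1 by blast
  define \<delta> where "\<delta> = min (\<sigma>/2) (min ((1 - s)/2) (\<eta> / (2*B)))"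
  have "0 < \<delta>"
    using s \<open>0 < \<eta>\<close> \<open>0 < \<sigma>\<close> B(1) by (simp add: \<delta>_def)
  have "\<delta> \<le> \<sigma>/2" "\<delta> \<le> (1 - s)/2" "\<delta> \<le> \<eta> / (2*B)"
    unfolding \<delta>_def by (simp_all only: min.coboundedI1 min.coboundedI2 order_refl)
  then have \<delta>: "\<delta> < \<sigma>" "s + 2*\<delta> \<le> 1" "2 * B * \<delta> \<le> \<eta>"
    using \<open>0 < \<sigma>\<close> B(1) by (simp_all add: field_simps)
  obtain v g where "buyer_type 1 v" "\<And>t. t \<in> {0..s + \<delta>} \<Longrightarrow> v t = w t + g t"
    and "continuous_on {0..s + \<delta>} g" "\<And>t. 0 \<le> g t" "\<And>t. g t \<noteq> 0 \<Longrightarrow> s < t"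
    and "1 - integral {0..s} w - 2 * B * \<delta> \<le> integral {0..s + \<delta>} g"
    using buyer_type_concentrate_after[OF w s(1) \<open>0 < \<delta>\<close> \<delta>(2) w_le] by blast
  moreover have "s < s + \<delta>" "s + \<delta> \<le> 1" "s + \<delta> < s + \<sigma>"
    using \<open>0 < \<delta>\<close> \<delta> by simp_all
  ultimately show thesis
    using \<delta>(3) by (intro that[of v "s + \<delta>" g]) auto
qed

definition utility :: "((real \<Rightarrow> real) \<Rightarrow> real \<Rightarrow> real) \<Rightarrow> ((real \<Rightarrow> real) \<Rightarrow> real \<Rightarrow> real)
    \<Rightarrow> (real \<Rightarrow> real) \<Rightarrow> real"
  where "utility r x v = integral {0..1} (\<lambda>t. r v t * v t - x v t)"

lemma buyer_type_const: "0 \<le> V \<Longrightarrow> buyer_type V (\<lambda>_. V)"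
  unfolding buyer_type_def using lipschitz_on_constant by auto

lemma mechanismD:
  assumes "mechanism V r x" "buyer_type V v"
  shows "continuous_on {0..1} (r v)" "\<And>t. t \<in> {0..1} \<Longrightarrow> 0 \<le> r v t \<and> r v t \<le> 1"
    "continuous_on {0..1} (x v)" "\<And>t. t \<in> {0..1} \<Longrightarrow> 0 \<le> x v t"
  using assms unfolding mechanism_def by auto

lemma truthfulD:
  assumes "truthful V r x" "buyer_type V v"
  shows "\<And>t. t \<in> {0..1} \<Longrightarrow> 0 \<le> r v t * v t - x v t"
    and "\<And>v' \<tau>. buyer_type V v' \<Longrightarrow> \<tau> \<in> {0..1} \<Longrightarrow>
           (\<And>t. t \<in> {0..\<tau>} \<Longrightarrow> 0 \<le> r v' t * v t - x v' t) \<Longrightarrow>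
           integral {0..\<tau>} (\<lambda>t. r v' t * v t - x v' t) \<le> utility r x v"
  using assms unfolding truthful_def utility_def by blast+

lemma revenue_nonneg:
  assumes "mechanism V r x" "buyer_type V v"
  shows "0 \<le> revenue x v"
  unfolding revenue_def using mechanismD[OF assms]
  by (intro integral_nonneg integrable_continuous_interval) auto

lemma utility_add_revenue:
  assumes "mechanism V r x" "buyer_type V v"
  shows "utility r x v + revenue x v = integral {0..1} (\<lambda>t. r v t * v t)"
proof -
  have "(\<lambda>t. r v t * v t) integrable_on {0..1}" "x v integrable_on {0..1}"
    using mechanismD[OF assms] buyer_typeD(1)[OF assms(2)]
    by (auto intro!: integrable_continuous_interval continuous_intros)
  then show ?thesis
    unfolding utility_def revenue_def by (simp add: integral_diff)
qed

lemma utility_nonneg: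
  assumes "mechanism V r x" "truthful V r x" "buyer_type V v"
  shows "0 \<le> utility r x v"
  unfolding utility_def
proof (rule integral_nonneg)
  show "(\<lambda>t. r v t * v t - x v t) integrable_on {0..1}"
    using mechanismD[OF assms(1,3)] buyer_typeD(1)[OF assms(3)]
    by (auto intro!: integrable_continuous_interval continuous_intros)
  show "0 \<le> r v t * v t - x v t" if "t \<in> {0..1}" for t
    using truthfulD(1)[OF assms(2,3) that] .
qed

lemma utility_le:
  assumes "mechanism V r x" "buyer_type V v"
  shows "utility r x v \<le> V"
proof -
  have "integral {0..1} (\<lambda>t. r v t * v t) \<le> integral {0..1} v"
    using mechanismD[OF assms] buyer_typeD[OF assms(2)]
    by (intro integral_le integrable_continuous_interval continuous_intros)
       (auto intro: mult_left_le_one_le)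
  then show ?thesis
    using utility_add_revenue[OF assms] revenue_nonneg[OF assms] buyer_typeD(3)[OF assms(2)]
    by simp
qed

lemma bdd_above_utility:
  assumes "mechanism V r x"
  shows "bdd_above (utility r x ` {v. buyer_type V v})"
  using utility_le[OF assms] by (intro bdd_aboveI[of _ V]) auto

lemma bdd_below_revenue:
  assumes "mechanism V r x"
  shows "bdd_below (revenue x ` {v. buyer_type V v})"
  using revenue_nonneg[OF assms] by (intro bdd_belowI[of _ 0]) auto

lemma utility_ge_when_mimicking:
  assumes mech: "mechanism V r x" and truth: "truthful V r x"
    and w: "buyer_type V w" and v: "buyer_type V v" and "\<tau> \<in> {0..1}"
    and v_eq: "\<And>t. t \<in> {0..\<tau>} \<Longrightarrow> v t = w t + g t"
    and g: "continuous_on {0..\<tau>} g" "\<And>t. t \<in> {0..\<tau>} \<Longrightarrow> 0 \<le> g t"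
    and "0 \<le> \<rho>" and rate: "\<And>t. t \<in> {0..\<tau>} \<Longrightarrow> g t \<noteq> 0 \<Longrightarrow> \<rho> \<le> r w t"
  shows "\<rho> * integral {0..\<tau>} g \<le> utility r x v"
proof -
  have pointwise: "\<rho> * g t \<le> r w t * v t - x w t" if "t \<in> {0..\<tau>}" for t
  proof -
    have "\<rho> * g t \<le> r w t * g t"
      using rate[OF that] g(2)[OF that] by (cases "g t = 0") (auto intro: mult_right_mono)
    moreover have "0 \<le> r w t * w t - x w t"
      using truthfulD(1)[OF truth w] that \<open>\<tau> \<in> {0..1}\<close> by auto
    ultimately show ?thesis
      using v_eq[OF that] by (simp add: algebra_simps)
  qed
  have "\<rho> * integral {0..\<tau>} g = integral {0..\<tau>} (\<lambda>t. \<rho> * g t)"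
    by simp
  also have "\<dots> \<le> integral {0..\<tau>} (\<lambda>t. r w t * v t - x w t)"
  proof (rule integral_le[OF _ _ pointwise])
    show "(\<lambda>t. \<rho> * g t) integrable_on {0..\<tau>}"
      using g(1) by (intro integrable_continuous_interval continuous_intros)
    show "(\<lambda>t. r w t * v t - x w t) integrable_on {0..\<tau>}"
      using mechanismD(1,3)[OF mech w] buyer_typeD(1)[OF v] \<open>\<tau> \<in> {0..1}\<close>
      by (intro integrable_on_subinterval_of_continuous[of 0 1] continuous_intros) auto
  qed
  also have "\<dots> \<le> utility r x v"
  proof (rule truthfulD(2)[OF truth v w \<open>\<tau> \<in> {0..1}\<close>])
    show "0 \<le> r w t * v t - x w t" if "t \<in> {0..\<tau>}" for t
      using pointwise[OF that] mult_nonneg_nonneg[OF \<open>0 \<le> \<rho>\<close> g(2)[OF that]] by linarith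
  qed
  finally show ?thesis .
qed

lemma deviation_utility_ge:
  assumes mech: "mechanism 1 r x" and truth: "truthful 1 r x" and w: "buyer_type 1 w"
    and s: "0 \<le> s" "s < 1" and "0 < \<eta>"
  obtains v where "buyer_type 1 v" "r w s * (1 - integral {0..s} w) - 2*\<eta> \<le> utility r x v"
proof -
  note r_w = mechanismD[OF mech w]
  define q where "q = 1 - integral {0..s} w"
  have q: "0 \<le> q" "q \<le> 1"
    unfolding q_def using buyer_type_integral_initial_bounds[OF w] s by auto
  have r_s: "0 \<le> r w s" "r w s \<le> 1"
    using r_w(2)[of s] s by auto
  show thesis
  proof (cases "r w s < \<eta>")
    case True
    then have "r w s * q - 2*\<eta> \<le> 0"
      using r_s q \<open>0 < \<eta>\<close> mult_left_le[of q "r w s"] by linarith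
    then show thesis
      using that[OF w] utility_nonneg[OF mech truth w] by (simp add: q_def)
  next
    case False
    obtain \<sigma> where "0 < \<sigma>" and \<sigma>: "\<forall>t\<in>{0..1}. dist t s < \<sigma> \<longrightarrow> dist (r w t) (r w s) < \<eta>"
      using r_w(1) s \<open>0 < \<eta>\<close> unfolding continuous_on_iff by (meson atLeastAtMost_iff less_imp_le)
    obtain v \<tau> g where v: "buyer_type 1 v" and \<tau>: "s < \<tau>" "\<tau> \<le> 1" "\<tau> < s + \<sigma>"
      and v_eq: "\<And>t. t \<in> {0..\<tau>} \<Longrightarrow> v t = w t + g t"
      and g: "continuous_on {0..\<tau>} g" "\<And>t. 0 \<le> g t" "\<And>t. g t \<noteq> 0 \<Longrightarrow> s < t"
      and g_mass: "1 - integral {0..s} w - \<eta> \<le> integral {0..\<tau>} g"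
      using buyer_type_concentrate_near[OF w s \<open>0 < \<eta>\<close> \<open>0 < \<sigma>\<close>] by blast
    have "r w s - \<eta> \<le> r w t" if "t \<in> {0..\<tau>}" "g t \<noteq> 0" for t
    proof -
      have "t \<in> {0..1}" "dist t s < \<sigma>"
        using that g(3)[OF that(2)] \<tau> by (auto simp: dist_real_def)
      then show ?thesis
        using \<sigma> by (force simp: dist_real_def)
    qed
    then have "(r w s - \<eta>) * integral {0..\<tau>} g \<le> utility r x v"
      using False s \<tau> g(2)
      by (intro utility_ge_when_mimicking[OF mech truth w v _ v_eq g(1)]) auto
    moreover have "(r w s - \<eta>) * (q - \<eta>) \<le> (r w s - \<eta>) * integral {0..\<tau>} g"
      using False g_mass by (intro mult_left_mono) (auto simp: q_def)
    moreover have "r w s * q - 2*\<eta> \<le> (r w s - \<eta>) * (q - \<eta>)"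
      using r_s q \<open>0 < \<eta>\<close> by (intro diff_mult_diff_ge) auto
    ultimately show thesis
      using that[OF v] by (simp add: q_def)
  qed
qed

lemma rate_mult_survival_le_SUP_utility:
  assumes mech: "mechanism 1 r x" and truth: "truthful 1 r x" and w: "buyer_type 1 w"
    and s: "s \<in> {0..1}"
  shows "r w s * (1 - integral {0..s} w) \<le> (SUP v\<in>{v. buyer_type 1 v}. utility r x v)"
proof -
  have utility_le_SUP: "utility r x v \<le> (SUP v\<in>{v. buyer_type 1 v}. utility r x v)"
    if "buyer_type 1 v" for v
    using that by (intro cSUP_upper bdd_above_utility[OF mech]) simp
  show ?thesis
  proof (cases "s = 1")
    case True
    then show ?thesis
      using utility_nonneg[OF mech truth w] utility_le_SUP[OF w] buyer_typeD(3)[OF w] by simp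
  next
    case False
    show ?thesis
    proof (rule field_le_epsilon)
      fix e :: real assume "0 < e"
      have "0 \<le> s" "s < 1"
        using s False by auto
      then obtain v where "buyer_type 1 v" "r w s * (1 - integral {0..s} w) - 2*(e/2) \<le> utility r x v"
        using deviation_utility_ge[OF mech truth w _ _ half_gt_zero[OF \<open>0 < e\<close>]] by blast
      then show "r w s * (1 - integral {0..s} w) \<le> (SUP v\<in>{v. buyer_type 1 v}. utility r x v) + e"
        using utility_le_SUP by fastforce
    qed
  qed
qed

lemma utility_add_revenue_le:
  assumes mech: "mechanism 1 r x" and truth: "truthful 1 r x" and v: "buyer_type 1 v"
    and K: "0 < K" "K \<le> 1" and SUP_le: "(SUP w\<in>{w. buyer_type 1 w}. utility r x w) \<le> K"
  shows "utility r x v + revenue x v \<le> K * ln (1/K) + K"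
  unfolding utility_add_revenue[OF mech v]
proof (rule integral_mult_le_of_survival_bound[OF buyer_typeD[OF v] mechanismD(1,2)[OF mech v] K])
  fix t :: real assume "t \<in> {0..1}"
  then show "r v t * (1 - integral {0..t} v) \<le> K"
    using rate_mult_survival_le_SUP_utility[OF mech truth v] SUP_le by (meson order_trans)
qed

lemma SUP_utility_bounds:
  assumes mech: "mechanism 1 r x" and truth: "truthful 1 r x"
  shows "0 \<le> (SUP v\<in>{v. buyer_type 1 v}. utility r x v)"
    and "(SUP v\<in>{v. buyer_type 1 v}. utility r x v) \<le> 1"
proof -
  have one: "buyer_type 1 (\<lambda>_. 1)"
    by (rule buyer_type_const) simp
  then show "0 \<le> (SUP v\<in>{v. buyer_type 1 v}. utility r x v)"
    using utility_nonneg[OF mech truth one]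
    by (intro cSUP_upper2[OF bdd_above_utility[OF mech]]) auto
  show "(SUP v\<in>{v. buyer_type 1 v}. utility r x v) \<le> 1"
    using one utility_le[OF mech] by (intro cSUP_least) auto
qed

lemma SUP_utility_add_INF_revenue_le:
  assumes mech: "mechanism 1 r x" and truth: "truthful 1 r x"
    and K: "0 < K" "K \<le> 1" and SUP_le: "(SUP v\<in>{v. buyer_type 1 v}. utility r x v) \<le> K"
  shows "(SUP v\<in>{v. buyer_type 1 v}. utility r x v) + (INF v\<in>{v. buyer_type 1 v}. revenue x v)
           \<le> K * ln (1/K) + K"
proof -
  let ?R = "INF v\<in>{v. buyer_type 1 v}. revenue x v"
  have "utility r x v \<le> K * ln (1/K) + K - ?R" if "buyer_type 1 v" for v
    using utility_add_revenue_le[OF mech truth that K SUP_le]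
      cINF_lower[OF bdd_below_revenue[OF mech], of v] that by simp
  moreover have "{v. buyer_type 1 v} \<noteq> {}"
    using buyer_type_const[of 1] by auto
  ultimately have "(SUP v\<in>{v. buyer_type 1 v}. utility r x v) \<le> K * ln (1/K) + K - ?R"
    by (intro cSUP_least) auto
  then show ?thesis by simp
qed

theorem theorem8:
  fixes r x :: "(real \<Rightarrow> real) \<Rightarrow> real \<Rightarrow> real"
  assumes "mechanism 1 r x"
    and "truthful 1 r x"
  shows "(INF v\<in>{v. buyer_type 1 v}. revenue x v) \<le> exp (-1)"
proof (rule field_le_epsilon)
  fix \<epsilon> :: real assume "0 < \<epsilon>"
  define U where "U = (SUP v\<in>{v. buyer_type 1 v}. utility r x v)"
  \<comment> \<open>not \<open>K = U\<close>: the allocation bound needs \<open>0 < K\<close>, and \<open>U\<close> may vanish\<close>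
  define K where "K = min 1 (U + \<epsilon>)"
  have K: "0 < K" "K \<le> 1" "U \<le> K" "K \<le> U + \<epsilon>"
    using SUP_utility_bounds[OF assms] \<open>0 < \<epsilon>\<close> by (auto simp: K_def U_def)
  then have "U + (INF v\<in>{v. buyer_type 1 v}. revenue x v) \<le> K * ln (1/K) + K"
    unfolding U_def by (intro SUP_utility_add_INF_revenue_le[OF assms])
  then show "(INF v\<in>{v. buyer_type 1 v}. revenue x v) \<le> exp (-1) + \<epsilon>"
    using mult_ln_inverse_le_exp_minus_one[OF K(1)] K(4) by linarith
qed

end
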